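(* Consider a wave sequence $U_L\xrightarrow{C}U_M\xrightarrow{S}U_R$ with $U_L\neq U_R$, consisting of an admissible $C$-wave from $U_L$ to $U_M$ followed by an admissible $S$-wave from $U_M$ to $U_R$. This wave sequence is compatible if and only if $U_M\in\mathcal{L}\cup\mathcal{T}$ and $0\le S_R\le S^k(U_M)$.
   Context: System: $\partial_t S+\partial_x f(S,C)=0$, $\partial_t[(S+\mathcal{A})C]+\partial_x[f(S,C)C]=0$, with $\mathcal{A}>0$ constant and states $U=(S,C)\in[0,1]^2$. The flux $f$ satisfies: (a) $f\in\mathscr{C}^2$, $f(0,C)=0$, $f(1,C)=1$, $\partial_Sf(0,C)=\partial_Sf(1,C)=0$; (b) for each $C$, $f(\cdot,C)$ is strictly increasing and S-shaped with a single inflection point (convex then concave); (c) $\partial_Cf>0$ for $0<S<1$. Eigenvalues: $\lambda_C(S,C)=f(S,C)/(S+\mathcal{A})$, $\lambda_S(S,C)=\partial_Sf(S,C)$. Transition curve $\mathcal{T}=\{\lambda_S=\lambda_C\}$, $\mathcal{L}=\{\lambda_S>\lambda_C\}$, $\mathcal{R}=\{\lambda_S<\lambda_C\}$; for each $C$, $\mathcal{T}$ contains exactly one point $(S^*(C),C)$ with $S^*(C)\in(0,1)$. For a state $U=(S,C)$, $S^k(U)$ denotes the value $S'\in[0,1]$, $S'\ne S$, with $\lambda_C(S',C)=\lambda_C(U)$ (it lies on the opposite side of $\mathcal{T}$ from $U$); $S^k(U)=+\infty$ if no such $S'$ exists, and $S^k(U)=S^*(C)$ if $S=S^*(C)$.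 An $S$-wave from $U_1$ to $U_2$ requires $C_1=C_2=C$ and is the solution of the scalar Riemann problem $\partial_tS+\partial_xf(S,C)=0$ with left state $S_1$, right state $S_2$, built from shocks satisfying Oleinik's entropy condition and rarefactions; its initial velocity $v_i$ and final velocity $v_f$ are the smallest and largest propagation speeds in that wave fan. A $C$-wave from $U_1$ to $U_2$ is a contact discontinuity with $\lambda_C(U_1)=\lambda_C(U_2)$, travelling with speed $v_i=v_f=\lambda_C(U_1)$; it is admissible iff $U_1,U_2$ both lie in $\mathcal{L}\cup\mathcal{T}$ or both in $\mathcal{R}\cup\mathcal{T}$. A sequence $U_1\xrightarrow{a}U_2\xrightarrow{b}U_3$ is compatible iff $v_f^a\le v_i^b$ (and a longer sequence is compatible iff each consecutive pair is). *)

theory Defs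
  imports "HOL-Analysis.Analysis" "HOL-Library.Extended_Real"
begin

text \<open>States U = (S, C) are pairs of reals; the physical domain is [0,1]^2.\<close>

definition Dom :: "(real \<times> real) set" where
  "Dom = {0..1} \<times> {0..1}"

definition strict_convex_on_real :: "real set \<Rightarrow> (real \<Rightarrow> real) \<Rightarrow> bool" where
  "strict_convex_on_real I g \<longleftrightarrow>
     (\<forall>x\<in>I. \<forall>y\<in>I. \<forall>t::real. x \<noteq> y \<and> 0 < t \<and> t < 1 \<longrightarrow>
        g (t * x + (1 - t) * y) < t * g x + (1 - t) * g y)"

definition strict_concave_on_real :: "real set \<Rightarrow> (real \<Rightarrow> real) \<Rightarrow> bool" where
  "strict_concave_on_real I g \<longleftrightarrow> strict_convex_on_real I (\<lambda>x. - g x)"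

definition flux_C2 :: "(real \<Rightarrow> real \<Rightarrow> real) \<Rightarrow> (real \<Rightarrow> real \<Rightarrow> real) \<Rightarrow> (real \<Rightarrow> real \<Rightarrow> real) \<Rightarrow> bool" where
  "flux_C2 f fS fC \<longleftrightarrow>
     (\<forall>p\<in>Dom. ((\<lambda>q. f (fst q) (snd q)) has_derivative
                 (\<lambda>h. fS (fst p) (snd p) * fst h + fC (fst p) (snd p) * snd h)) (at p within Dom)) \<and>
     (\<exists>fSS fSC fCS fCC :: real \<Rightarrow> real \<Rightarrow> real.
        (\<forall>p\<in>Dom. ((\<lambda>q. fS (fst q) (snd q)) has_derivative
                 (\<lambda>h. fSS (fst p) (snd p) * fst h + fSC (fst p) (snd p) * snd h)) (at p within Dom)) \<and>
        (\<forall>p\<in>Dom. ((\<lambda>q. fC (fst q) (snd q)) has_derivative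
                 (\<lambda>h. fCS (fst p) (snd p) * fst h + fCC (fst p) (snd p) * snd h)) (at p within Dom)) \<and>
        continuous_on Dom (\<lambda>q. fSS (fst q) (snd q)) \<and>
        continuous_on Dom (\<lambda>q. fSC (fst q) (snd q)) \<and>
        continuous_on Dom (\<lambda>q. fCS (fst q) (snd q)) \<and>
        continuous_on Dom (\<lambda>q. fCC (fst q) (snd q)))"

definition lamC :: "(real \<Rightarrow> real \<Rightarrow> real) \<Rightarrow> real \<Rightarrow> real \<times> real \<Rightarrow> real" where
  "lamC f A U = f (fst U) (snd U) / (fst U + A)"

definition lamS :: "(real \<Rightarrow> real \<Rightarrow> real) \<Rightarrow> real \<times> real \<Rightarrow> real" where
  "lamS fS U = fS (fst U) (snd U)"

definition TT :: "(real \<Rightarrow> real \<Rightarrow> real) \<Rightarrow> (real \<Rightarrow> real \<Rightarrow> real) \<Rightarrow> real \<Rightarrow> (real \<times> real) set" where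
  "TT f fS A = {U \<in> Dom. lamS fS U = lamC f A U}"

definition LL :: "(real \<Rightarrow> real \<Rightarrow> real) \<Rightarrow> (real \<Rightarrow> real \<Rightarrow> real) \<Rightarrow> real \<Rightarrow> (real \<times> real) set" where
  "LL f fS A = {U \<in> Dom. lamS fS U > lamC f A U}"

definition RR :: "(real \<Rightarrow> real \<Rightarrow> real) \<Rightarrow> (real \<Rightarrow> real \<Rightarrow> real) \<Rightarrow> real \<Rightarrow> (real \<times> real) set" where
  "RR f fS A = {U \<in> Dom. lamS fS U < lamC f A U}"

definition Sstar :: "(real \<Rightarrow> real \<Rightarrow> real) \<Rightarrow> (real \<Rightarrow> real \<Rightarrow> real) \<Rightarrow> real \<Rightarrow> real \<Rightarrow> real" where
  "Sstar f fS A C = (THE S. 0 < S \<and> S < 1 \<and> (S, C) \<in> TT f fS A)"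

definition Sk :: "(real \<Rightarrow> real \<Rightarrow> real) \<Rightarrow> (real \<Rightarrow> real \<Rightarrow> real) \<Rightarrow> real \<Rightarrow> real \<times> real \<Rightarrow> ereal" where
  "Sk f fS A U =
     (if fst U = Sstar f fS A (snd U) then ereal (fst U)
      else if (\<exists>S'. 0 \<le> S' \<and> S' \<le> 1 \<and> S' \<noteq> fst U \<and> lamC f A (S', snd U) = lamC f A U)
      then ereal (THE S'. 0 \<le> S' \<and> S' \<le> 1 \<and> S' \<noteq> fst U \<and> lamC f A (S', snd U) = lamC f A U)
      else \<infinity>)"

text \<open>Elementary pieces of the wave fan of the scalar Riemann problem (for fixed C):
  an entropy shock from a to b or a rarefaction from a to b.\<close>
datatype piece = Shock real real | Raref real real

fun p_start :: "piece \<Rightarrow> real" where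
  "p_start (Shock a b) = a" | "p_start (Raref a b) = a"

fun p_end :: "piece \<Rightarrow> real" where
  "p_end (Shock a b) = b" | "p_end (Raref a b) = b"

fun p_vi :: "(real \<Rightarrow> real \<Rightarrow> real) \<Rightarrow> (real \<Rightarrow> real \<Rightarrow> real) \<Rightarrow> real \<Rightarrow> piece \<Rightarrow> real" where
  "p_vi f fS C (Shock a b) = (f b C - f a C) / (b - a)"
| "p_vi f fS C (Raref a b) = fS a C"

fun p_vf :: "(real \<Rightarrow> real \<Rightarrow> real) \<Rightarrow> (real \<Rightarrow> real \<Rightarrow> real) \<Rightarrow> real \<Rightarrow> piece \<Rightarrow> real" where
  "p_vf f fS C (Shock a b) = (f b C - f a C) / (b - a)"
| "p_vf f fS C (Raref a b) = fS b C"

text \<open>Oleinik's entropy condition for a shock from u_minus to u_plus with speed sigma: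
  for all u strictly between, (f u - f u_minus)/(u - u_minus) >= sigma >= (f u - f u_plus)/(u - u_plus).\<close>
fun p_valid :: "(real \<Rightarrow> real \<Rightarrow> real) \<Rightarrow> (real \<Rightarrow> real \<Rightarrow> real) \<Rightarrow> real \<Rightarrow> piece \<Rightarrow> bool" where
  "p_valid f fS C (Shock a b) \<longleftrightarrow>
     a \<noteq> b \<and> a \<in> {0..1} \<and> b \<in> {0..1} \<and>
     (\<forall>u. min a b < u \<and> u < max a b \<longrightarrow>
        (f u C - f a C) / (u - a) \<ge> (f b C - f a C) / (b - a) \<and>
        (f b C - f a C) / (b - a) \<ge> (f u C - f b C) / (u - b))"
| "p_valid f fS C (Raref a b) \<longleftrightarrow>
     a \<in> {0..1} \<and> b \<in> {0..1} \<and>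
     (if a \<le> b then (\<forall>x y. a \<le> x \<and> x \<le> y \<and> y \<le> b \<longrightarrow> fS x C \<le> fS y C)
      else (\<forall>x y. b \<le> x \<and> x \<le> y \<and> y \<le> a \<longrightarrow> fS y C \<le> fS x C))"

text \<open>An S-wave from U1 to U2: C1 = C2 = C and a nonempty fan of valid pieces, joined
  end-to-start, going from S1 to S2, with nondecreasing propagation speeds.
  (The trivial wave S1 = S2 is the fan [Raref S1 S1], with speed lambda_S.)\<close>
definition S_wave :: "(real \<Rightarrow> real \<Rightarrow> real) \<Rightarrow> (real \<Rightarrow> real \<Rightarrow> real) \<Rightarrow> real \<times> real \<Rightarrow> real \<times> real \<Rightarrow> piece list \<Rightarrow> bool" where
  "S_wave f fS U1 U2 ps \<longleftrightarrow>
     snd U1 = snd U2 \<and> ps \<noteq> [] \<and>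
     p_start (hd ps) = fst U1 \<and> p_end (last ps) = fst U2 \<and>
     (\<forall>p\<in>set ps. p_valid f fS (snd U1) p) \<and>
     (\<forall>i. Suc i < length ps \<longrightarrow>
        p_end (ps ! i) = p_start (ps ! Suc i) \<and>
        p_vf f fS (snd U1) (ps ! i) \<le> p_vi f fS (snd U1) (ps ! Suc i))"

definition S_vi :: "(real \<Rightarrow> real \<Rightarrow> real) \<Rightarrow> (real \<Rightarrow> real \<Rightarrow> real) \<Rightarrow> real \<times> real \<Rightarrow> piece list \<Rightarrow> real" where
  "S_vi f fS U1 ps = p_vi f fS (snd U1) (hd ps)"

definition S_vf :: "(real \<Rightarrow> real \<Rightarrow> real) \<Rightarrow> (real \<Rightarrow> real \<Rightarrow> real) \<Rightarrow> real \<times> real \<Rightarrow> piece list \<Rightarrow> real" where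
  "S_vf f fS U1 ps = p_vf f fS (snd U1) (last ps)"

definition C_wave_admissible :: "(real \<Rightarrow> real \<Rightarrow> real) \<Rightarrow> (real \<Rightarrow> real \<Rightarrow> real) \<Rightarrow> real \<Rightarrow> real \<times> real \<Rightarrow> real \<times> real \<Rightarrow> bool" where
  "C_wave_admissible f fS A U1 U2 \<longleftrightarrow>
     U1 \<in> Dom \<and> U2 \<in> Dom \<and> lamC f A U1 = lamC f A U2 \<and>
     ((U1 \<in> LL f fS A \<union> TT f fS A \<and> U2 \<in> LL f fS A \<union> TT f fS A) \<or>
      (U1 \<in> RR f fS A \<union> TT f fS A \<and> U2 \<in> RR f fS A \<union> TT f fS A))"

definition C_v :: "(real \<Rightarrow> real \<Rightarrow> real) \<Rightarrow> real \<Rightarrow> real \<times> real \<Rightarrow> real" where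
  "C_v f A U1 = lamC f A U1"

definition compatible_CS :: "(real \<Rightarrow> real \<Rightarrow> real) \<Rightarrow> (real \<Rightarrow> real \<Rightarrow> real) \<Rightarrow> real \<Rightarrow> real \<times> real \<Rightarrow> real \<times> real \<Rightarrow> piece list \<Rightarrow> bool" where
  "compatible_CS f fS A UL UM ps \<longleftrightarrow> C_v f A UL \<le> S_vi f fS UM ps"

definition flux_hyps :: "(real \<Rightarrow> real \<Rightarrow> real) \<Rightarrow> (real \<Rightarrow> real \<Rightarrow> real) \<Rightarrow> (real \<Rightarrow> real \<Rightarrow> real) \<Rightarrow> real \<Rightarrow> bool" where
  "flux_hyps f fS fC A \<longleftrightarrow>
     A > 0 \<and> flux_C2 f fS fC \<and>
     (\<forall>C\<in>{0..1}. f 0 C = 0 \<and> f 1 C = 1 \<and> fS 0 C = 0 \<and> fS 1 C = 0) \<and>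
     (\<forall>C\<in>{0..1}. strict_mono_on {0..1} (\<lambda>S. f S C) \<and>
        (\<exists>sI. 0 < sI \<and> sI < 1 \<and> strict_convex_on_real {0..sI} (\<lambda>S. f S C)
              \<and> strict_concave_on_real {sI..1} (\<lambda>S. f S C))) \<and>
     (\<forall>C\<in>{0..1}. \<forall>S. 0 < S \<and> S < 1 \<longrightarrow> fC S C > 0) \<and>
     (\<forall>C\<in>{0..1}. \<exists>!S. 0 < S \<and> S < 1 \<and> (S, C) \<in> TT f fS A)"

end

theory Submission
  imports Defs
begin

text \<open>Along a line of fixed C put lam = f / (S + A), the eigenvalue lambda_C. Its derivative has the
  sign of gap = (S + A) fS - f, which vanishes only at 0 and S*, so lam increases on [0, S*] and
  decreases on [S*, 1]. Hence L \<union> T is {S \<le> S*}, and for S_M \<le> S* the condition S_R \<le> S^k(U_M)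
  just says lam S_R \<ge> lam S_M. As f = lam (S + A), a chord of f from S_M is at least as steep as
  lam S_M iff lam at its other end is at least lam S_M. Since f has a single inflection point, an
  entropy wave fan never reverses direction (f would be affine near the turning point), and its
  speeds increase along it; a monotone fan from S_M therefore starts no slower than the contact
  exactly when its end state satisfies the condition above. In R the first shock or rarefaction
  is always slower than the contact.\<close>

lemma has_real_derivative_slice:
  assumes deriv: "\<forall>p\<in>Dom. ((\<lambda>q. g (fst q) (snd q)) has_derivative
                 (\<lambda>h. g1 (fst p) (snd p) * fst h + g2 (fst p) (snd p) * snd h)) (at p within Dom)"
    and C: "C \<in> {0..1}" and x: "x \<in> {0..1}"
  shows "((\<lambda>s. g s C) has_real_derivative g1 x C) (at x within {0..1})"
proof -
  have slice: "(\<lambda>s. (s, C)) ` {0..1} \<subseteq> Dom" using C by (auto simp: Dom_def)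
  have "((\<lambda>s::real. (s, C)) has_derivative (\<lambda>h. (h, 0))) (at x within {0..1})"
    by (auto intro!: derivative_eq_intros)
  from has_derivative_in_compose2[OF _ slice x this, of "\<lambda>q. g (fst q) (snd q)"
      "\<lambda>p h. g1 (fst p) (snd p) * fst h + g2 (fst p) (snd p) * snd h"] deriv
  have "((\<lambda>s. g s C) has_derivative (\<lambda>h. g1 x C * h)) (at x within {0..1})"
    by auto
  then show ?thesis unfolding has_field_derivative_def .
qed

lemma strict_convex_on_real_not_affine:
  assumes "strict_convex_on_real I g" "x \<in> I" "y \<in> I" "x \<noteq> y"
    and "g x = \<alpha> + \<beta> * x" "g y = \<alpha> + \<beta> * y" "g ((x + y) / 2) = \<alpha> + \<beta> * ((x + y) / 2)"
  shows False
proof -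
  have "g (1/2 * x + (1 - 1/2) * y) < 1/2 * g x + (1 - 1/2) * g y"
    by (rule assms(1)[unfolded strict_convex_on_real_def, rule_format]) (use assms(2-4) in auto)
  moreover have "1/2 * x + (1 - 1/2) * y = (x + y) / 2" by simp
  ultimately show False using assms(5-7) by (simp add: field_simps)
qed

locale flux_slice =
  fixes f fS fC :: "real \<Rightarrow> real \<Rightarrow> real" and A C :: real
  assumes flux: "flux_hyps f fS fC A" and C_range: "C \<in> {0..1}"
begin

definition lam :: "real \<Rightarrow> real" where "lam s = f s C / (s + A)"

definition gap :: "real \<Rightarrow> real" where "gap s = fS s C * (s + A) - f s C"

definition s_star :: real where "s_star = Sstar f fS A C"

lemma A_pos: "A > 0"
  using flux by (simp add: flux_hyps_def)

lemma f_boundary: "f 0 C = 0" "f 1 C = 1" "fS 0 C = 0" "fS 1 C = 0"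
  using flux C_range by (auto simp: flux_hyps_def)

lemma f_has_derivative: "x \<in> {0..1} \<Longrightarrow> ((\<lambda>s. f s C) has_real_derivative fS x C) (at x within {0..1})"
  using flux C_range has_real_derivative_slice[of f fS fC] by (auto simp: flux_hyps_def flux_C2_def)

lemma f_has_derivative_at: "0 < x \<Longrightarrow> x < 1 \<Longrightarrow> ((\<lambda>s. f s C) has_real_derivative fS x C) (at x)"
  using f_has_derivative[of x] at_within_interior[of x "{0..1::real}"] by auto

lemma continuous_on_f: "continuous_on {0..1} (\<lambda>s. f s C)"
  using f_has_derivative by (intro has_derivative_continuous_on) (auto simp: has_field_derivative_def)

lemma continuous_on_fS: "continuous_on {0..1} (\<lambda>s. fS s C)"
proof -
  obtain fSS fSC where "\<forall>p\<in>Dom. ((\<lambda>q. fS (fst q) (snd q)) has_derivative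
                 (\<lambda>h. fSS (fst p) (snd p) * fst h + fSC (fst p) (snd p) * snd h)) (at p within Dom)"
    using flux by (auto simp: flux_hyps_def flux_C2_def)
  from has_real_derivative_slice[OF this C_range] show ?thesis
    by (intro has_derivative_continuous_on) (auto simp: has_field_derivative_def)
qed

lemma f_strict_mono: "strict_mono_on {0..1} (\<lambda>s. f s C)"
  using flux C_range by (auto simp: flux_hyps_def)

lemma f_pos: "0 < s \<Longrightarrow> s \<le> 1 \<Longrightarrow> f s C > 0"
  using f_strict_mono[unfolded strict_mono_on_def, rule_format, of 0 s] f_boundary by auto

lemma f_eq_lam: "0 \<le> s \<Longrightarrow> f s C = lam s * (s + A)"
  using A_pos by (simp add: lam_def)

lemma lamC_slice: "lamC f A (s, C) = lam s"
  by (simp add: lamC_def lam_def)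

lemma lam_le_fS_iff_gap_nonneg: "0 \<le> s \<Longrightarrow> lam s \<le> fS s C \<longleftrightarrow> 0 \<le> gap s"
  using A_pos by (simp add: gap_def lam_def pos_divide_le_eq)

lemma transition_iff_gap_zero: "s \<in> {0..1} \<Longrightarrow> (s, C) \<in> TT f fS A \<longleftrightarrow> gap s = 0"
  using A_pos C_range
  by (auto simp: TT_def Dom_def lamS_def lamC_def gap_def field_simps)

lemma transition_unique: "\<exists>!s. 0 < s \<and> s < 1 \<and> (s, C) \<in> TT f fS A"
  using flux C_range by (auto simp: flux_hyps_def)

lemma s_star: "0 < s_star" "s_star < 1" "gap s_star = 0"
proof -
  from theI'[OF transition_unique] have "0 < s_star \<and> s_star < 1 \<and> (s_star, C) \<in> TT f fS A"
    unfolding s_star_def Sstar_def .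
  then show "0 < s_star" "s_star < 1" "gap s_star = 0"
    using transition_iff_gap_zero by auto
qed

lemma s_star_unique: "0 < s \<Longrightarrow> s < 1 \<Longrightarrow> gap s = 0 \<Longrightarrow> s = s_star"
proof -
  assume s: "0 < s" "s < 1" "gap s = 0"
  have "(s, C) \<in> TT f fS A" "(s_star, C) \<in> TT f fS A"
    using s s_star transition_iff_gap_zero by auto
  then show "s = s_star" using transition_unique s s_star by blast
qed

lemma continuous_on_gap: "continuous_on {0..1} gap"
  unfolding gap_def using continuous_on_fS continuous_on_f by (intro continuous_intros) auto

lemma continuous_on_lam: "continuous_on {0..1} lam"
  unfolding lam_def using continuous_on_f A_pos by (intro continuous_intros) auto

lemma lam_has_derivative: "0 < x \<Longrightarrow> x < 1 \<Longrightarrow> (lam has_real_derivative gap x / (x + A)\<^sup>2) (at x)"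
proof -
  assume x: "0 < x" "x < 1"
  have "x + A \<noteq> 0" using x A_pos by simp
  from DERIV_divide[OF f_has_derivative_at[OF x] DERIV_add[OF DERIV_ident DERIV_const[of A]] this]
  show ?thesis unfolding lam_def gap_def by (simp add: power2_eq_square)
qed

lemma gap_neg: assumes "s_star < s" "s \<le> 1" shows "gap s < 0"
proof (rule ccontr)
  assume "\<not> gap s < 0"
  have gap_1: "gap 1 = -1" using f_boundary by (simp add: gap_def)
  have "continuous_on {s..1} gap"
    using continuous_on_subset[OF continuous_on_gap] s_star assms by auto
  then obtain x where x: "s \<le> x" "x \<le> 1" "gap x = 0"
    using IVT2'[of gap 1 0 s] gap_1 \<open>\<not> gap s < 0\<close> assms by auto
  then have "x = s_star" using s_star_unique[of x] gap_1 assms s_star by fastforce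
  then show False using x assms by auto
qed

text \<open>Having no zero in (0, s_star), gap has one sign there; it cannot be negative,
  since lam rises from lam 0 = 0 to lam s_star > 0.\<close>
lemma gap_pos: assumes "0 < s" "s < s_star" shows "gap s > 0"
proof (rule ccontr)
  assume "\<not> gap s > 0"
  moreover have "gap s \<noteq> 0" using s_star_unique[of s] assms s_star by force
  ultimately have "gap s < 0" by simp
  have all_neg: "gap t < 0" if t: "0 < t" "t < s_star" for t
  proof (rule ccontr)
    assume "\<not> gap t < 0"
    have "continuous_on {min s t..max s t} gap"
      using continuous_on_subset[OF continuous_on_gap] assms t s_star by auto
    then obtain x where x: "min s t \<le> x" "x \<le> max s t" "gap x = 0"
      using IVT'[of gap s 0 t] IVT2'[of gap s 0 t] \<open>\<not> gap t < 0\<close> \<open>gap s < 0\<close>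
      by (cases "s \<le> t") auto
    then have "x = s_star" using s_star_unique[of x] assms t s_star by auto
    then show False using x assms t by auto
  qed
  have "lam s_star < lam 0"
  proof (rule DERIV_neg_imp_decreasing_open[of 0 s_star lam])
    fix x assume "0 < x" "x < s_star"
    then show "\<exists>y. (lam has_real_derivative y) (at x) \<and> y < 0"
      using lam_has_derivative[of x] all_neg[of x] s_star A_pos by (auto simp: divide_neg_pos)
  qed (use continuous_on_subset[OF continuous_on_lam] s_star in auto)
  moreover have "lam 0 = 0" using f_boundary by (simp add: lam_def)
  moreover have "lam s_star > 0" using f_pos[of s_star] s_star A_pos by (simp add: lam_def)
  ultimately show False by simp
qed

lemma lam_strict_mono: assumes "0 \<le> x" "x < y" "y \<le> s_star" shows "lam x < lam y"
proof (rule DERIV_pos_imp_increasing_open[of x y lam])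
  fix t assume "x < t" "t < y"
  then show "\<exists>d. (lam has_real_derivative d) (at t) \<and> 0 < d"
    using lam_has_derivative[of t] gap_pos[of t] assms s_star A_pos by auto
qed (use continuous_on_subset[OF continuous_on_lam] assms s_star in auto)

lemma lam_strict_antimono: assumes "s_star \<le> x" "x < y" "y \<le> 1" shows "lam y < lam x"
proof (rule DERIV_neg_imp_decreasing_open[of x y lam])
  fix t assume "x < t" "t < y"
  then show "\<exists>d. (lam has_real_derivative d) (at t) \<and> d < 0"
    using lam_has_derivative[of t] gap_neg[of t] assms s_star A_pos by (auto simp: divide_neg_pos)
qed (use continuous_on_subset[OF continuous_on_lam] assms s_star in auto)

lemma lam_less_iff_left: "x \<in> {0..s_star} \<Longrightarrow> y \<in> {0..s_star} \<Longrightarrow> lam x < lam y \<longleftrightarrow> x < y"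
  using lam_strict_mono[of x y] lam_strict_mono[of y x] by (cases x y rule: linorder_cases) auto

lemma lam_less_iff_right: "x \<in> {s_star..1} \<Longrightarrow> y \<in> {s_star..1} \<Longrightarrow> lam x < lam y \<longleftrightarrow> y < x"
  using lam_strict_antimono[of x y] lam_strict_antimono[of y x] by (cases x y rule: linorder_cases) auto

lemma lam_le_fS_iff: "s \<in> {0..1} \<Longrightarrow> lam s \<le> fS s C \<longleftrightarrow> s \<le> s_star"
proof -
  assume s: "s \<in> {0..1}"
  have "gap 0 = 0" using f_boundary by (simp add: gap_def)
  then have "0 \<le> gap s \<longleftrightarrow> s \<le> s_star"
    using s gap_pos[of s] gap_neg[of s] s_star
    by (cases "s = 0"; cases "s = s_star"; cases "s < s_star") auto
  then show ?thesis using lam_le_fS_iff_gap_nonneg s by auto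
qed

lemma LT_iff_le_s_star: "a \<in> {0..1} \<Longrightarrow> (a, C) \<in> LL f fS A \<union> TT f fS A \<longleftrightarrow> a \<le> s_star"
  using C_range lam_le_fS_iff[of a]
  by (auto simp: LL_def TT_def Dom_def lamS_def lamC_slice)

text \<open>As f = lam * (s + A), comparing a chord of f from a with the slope lam a amounts to
  comparing values of lam.\<close>
lemma f_diff_eq: "0 \<le> a \<Longrightarrow> 0 \<le> b \<Longrightarrow> f b C - f a C - lam a * (b - a) = (lam b - lam a) * (b + A)"
  using f_eq_lam[of a] f_eq_lam[of b] by (simp add: algebra_simps)

lemma lam_le_iff_chord: "0 \<le> a \<Longrightarrow> 0 \<le> b \<Longrightarrow> lam a \<le> lam b \<longleftrightarrow> lam a * (b - a) \<le> f b C - f a C"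
proof -
  assume "0 \<le> a" "0 \<le> b"
  moreover have "0 \<le> (lam b - lam a) * (b + A) \<longleftrightarrow> lam a \<le> lam b"
    using A_pos \<open>0 \<le> b\<close> by (simp add: zero_le_mult_iff)
  ultimately show ?thesis using f_diff_eq[of a b] by linarith
qed

lemma lam_less_iff_chord: "0 \<le> a \<Longrightarrow> 0 \<le> b \<Longrightarrow> lam a < lam b \<longleftrightarrow> lam a * (b - a) < f b C - f a C"
proof -
  assume "0 \<le> a" "0 \<le> b"
  moreover have "0 < (lam b - lam a) * (b + A) \<longleftrightarrow> lam a < lam b"
    using A_pos \<open>0 \<le> b\<close> by (simp add: zero_less_mult_iff)
  ultimately show ?thesis using f_diff_eq[of a b] by linarith
qed

lemma lam_eq_imp_gt_s_star:
  assumes "0 \<le> a" "a \<le> s_star" "0 \<le> b" "b \<le> 1" "b \<noteq> a" "lam b = lam a"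
  shows "s_star < b"
proof (rule ccontr)
  assume "\<not> s_star < b"
  then show False using lam_less_iff_left[of a b] lam_less_iff_left[of b a] assms by auto
qed

lemma Sk_s_star: "Sk f fS A (s_star, C) = ereal s_star"
  by (simp add: Sk_def s_star_def)

lemma Sk_eq_partner:
  assumes "0 \<le> a" "a < s_star" "s_star < b" "b \<le> 1" "lam b = lam a"
  shows "Sk f fS A (a, C) = ereal b"
proof -
  have "(THE x. 0 \<le> x \<and> x \<le> 1 \<and> x \<noteq> a \<and> lam x = lam a) = b"
  proof (rule the_equality)
    fix x assume x: "0 \<le> x \<and> x \<le> 1 \<and> x \<noteq> a \<and> lam x = lam a"
    then have "s_star < x" using lam_eq_imp_gt_s_star assms by auto
    then show "x = b" using lam_less_iff_right[of x b] lam_less_iff_right[of b x] x assms by auto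
  qed (use assms in auto)
  then show ?thesis using assms by (auto simp: Sk_def s_star_def lamC_slice)
qed

lemma Sk_eq_infinity:
  assumes "0 \<le> a" "a < s_star" "\<nexists>b. s_star < b \<and> b \<le> 1 \<and> lam b = lam a"
  shows "Sk f fS A (a, C) = \<infinity>"
  using assms lam_eq_imp_gt_s_star[of a] by (auto simp: Sk_def s_star_def lamC_slice)

lemma le_Sk_iff:
  assumes a: "0 \<le> a" "a \<le> s_star" and c: "a \<le> c" "c \<le> 1"
  shows "ereal c \<le> Sk f fS A (a, C) \<longleftrightarrow> lam a \<le> lam c"
proof -
  have left: "lam a \<le> lam c" if "c \<le> s_star"
    using lam_less_iff_left[of c a] a c that by auto
  consider (at_s_star) "a = s_star"
    | (partner) b where "a < s_star" "s_star < b" "b \<le> 1" "lam b = lam a"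
    | (no_partner) "a < s_star" "\<nexists>b. s_star < b \<and> b \<le> 1 \<and> lam b = lam a"
    using a by force
  then show ?thesis
  proof cases
    case at_s_star
    then show ?thesis using Sk_s_star lam_less_iff_right[of c s_star] c by force
  next
    case (partner b)
    then show ?thesis
      using Sk_eq_partner[OF a(1) partner] left lam_less_iff_right[of c b] c by force
  next
    case no_partner
    have "lam a \<le> lam c"
    proof (cases "c \<le> s_star")
      case False
      show ?thesis
      proof (rule ccontr)
        assume "\<not> lam a \<le> lam c"
        moreover have "lam a < lam s_star" using lam_less_iff_left[of a s_star] no_partner a s_star by auto
        moreover have "continuous_on {s_star..c} lam"
          using continuous_on_subset[OF continuous_on_lam] s_star c by auto
        ultimately obtain x where "s_star \<le> x" "x \<le> c" "lam x = lam a"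
          using IVT2'[of lam c "lam a" s_star] False by auto
        moreover have "x \<noteq> s_star" using \<open>lam a < lam s_star\<close> \<open>lam x = lam a\<close> by auto
        ultimately show False using no_partner c by auto
      qed
    qed (rule left)
    then show ?thesis using Sk_eq_infinity[OF a(1) no_partner] by simp
  qed
qed

lemma f_increment_ge:
  assumes "0 \<le> u" "u \<le> v" "v \<le> 1" "\<And>x. u \<le> x \<Longrightarrow> x \<le> v \<Longrightarrow> k \<le> fS x C"
  shows "k * (v - u) \<le> f v C - f u C"
proof -
  have "(\<lambda>x. f x C - k * x) u \<le> (\<lambda>x. f x C - k * x) v"
  proof (rule DERIV_nonneg_imp_increasing_open[OF assms(2)])
    fix x assume x: "u < x" "x < v"
    have "((\<lambda>x. f x C - k * x) has_real_derivative fS x C - k * 1) (at x)"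
      using x assms by (intro DERIV_diff f_has_derivative_at DERIV_cmult DERIV_ident) auto
    then show "\<exists>y. ((\<lambda>x. f x C - k * x) has_real_derivative y) (at x) \<and> 0 \<le> y"
      using assms(4)[of x] x by auto
  qed (use continuous_on_subset[OF continuous_on_f, of "{u..v}"] assms in \<open>auto intro!: continuous_intros\<close>)
  then show ?thesis by (simp add: algebra_simps)
qed

lemma f_increment_le:
  assumes "0 \<le> u" "u \<le> v" "v \<le> 1" "\<And>x. u \<le> x \<Longrightarrow> x \<le> v \<Longrightarrow> fS x C \<le> k"
  shows "f v C - f u C \<le> k * (v - u)"
proof -
  have "(\<lambda>x. f x C - k * x) v \<le> (\<lambda>x. f x C - k * x) u"
  proof (rule DERIV_nonpos_imp_decreasing_open[OF assms(2)])
    fix x assume x: "u < x" "x < v"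
    have "((\<lambda>x. f x C - k * x) has_real_derivative fS x C - k * 1) (at x)"
      using x assms by (intro DERIV_diff f_has_derivative_at DERIV_cmult DERIV_ident) auto
    then show "\<exists>y. ((\<lambda>x. f x C - k * x) has_real_derivative y) (at x) \<and> y \<le> 0"
      using assms(4)[of x] x by auto
  qed (use continuous_on_subset[OF continuous_on_f, of "{u..v}"] assms in \<open>auto intro!: continuous_intros\<close>)
  then show ?thesis by (simp add: algebra_simps)
qed

lemma f_not_affine:
  assumes "0 \<le> lo" "lo < hi" "hi \<le> 1" "\<And>u. lo < u \<Longrightarrow> u < hi \<Longrightarrow> f u C = \<alpha> + \<beta> * u"
  shows False
proof -
  obtain sI where sI: "strict_convex_on_real {0..sI} (\<lambda>S. f S C)"
      "strict_concave_on_real {sI..1} (\<lambda>S. f S C)"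
    using flux C_range unfolding flux_hyps_def by blast
  show False
  proof (cases "lo < sI")
    case True
    define x where "x = (2 * lo + min hi sI) / 3"
    define y where "y = (lo + 2 * min hi sI) / 3"
    have "lo < x" "x < y" "y < min hi sI" using True assms by (auto simp: x_def y_def)
    then show False
      using strict_convex_on_real_not_affine[OF sI(1), of x y \<alpha> \<beta>] assms by auto
  next
    case False
    define x where "x = (2 * lo + hi) / 3"
    define y where "y = (lo + 2 * hi) / 3"
    have "lo < x" "x < y" "y < hi" using assms by (auto simp: x_def y_def)
    then show False
      using strict_convex_on_real_not_affine[OF sI(2)[unfolded strict_concave_on_real_def], of x y "-\<alpha>" "-\<beta>"]
        False assms by auto
  qed
qed

lemma piece_range: "p_valid f fS C p \<Longrightarrow> p_start p \<in> {0..1} \<and> p_end p \<in> {0..1}"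
  by (cases p) auto

lemma piece_vi_le_vf: "p_valid f fS C p \<Longrightarrow> p_vi f fS C p \<le> p_vf f fS C p"
  by (cases p) (auto split: if_splits)

lemma trivial_piece_speeds: "p_valid f fS C p \<Longrightarrow> p_start p = p_end p \<Longrightarrow> p_vi f fS C p = p_vf f fS C p"
  by (cases p) auto

text \<open>Oleinik's condition for shocks, and monotonicity of fS for rarefactions, say that on a rising
  piece f lies above its lines of slope vi through the start and of slope vf through the end; on a
  falling piece it lies below them.\<close>
lemma rising_piece_above_lines:
  assumes "p_valid f fS C p" "p_start p < p_end p" "p_start p < u" "u < p_end p"
  shows "f (p_start p) C + p_vi f fS C p * (u - p_start p) \<le> f u C"
    and "f (p_end p) C + p_vf f fS C p * (u - p_end p) \<le> f u C"
proof -
  have "f (p_start p) C + p_vi f fS C p * (u - p_start p) \<le> f u C \<and>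
        f (p_end p) C + p_vf f fS C p * (u - p_end p) \<le> f u C"
  proof (cases p)
    case (Shock a b)
    define \<sigma> where "\<sigma> = (f b C - f a C) / (b - a)"
    have "min a b < u" "u < max a b" using Shock assms by auto
    with assms(1) have "\<sigma> \<le> (f u C - f a C) / (u - a)" "(f u C - f b C) / (u - b) \<le> \<sigma>"
      unfolding Shock \<sigma>_def p_valid.simps by blast+
    then have "\<sigma> * (u - a) \<le> f u C - f a C" "\<sigma> * (u - b) \<le> f u C - f b C"
      using Shock assms by (simp_all add: pos_le_divide_eq neg_divide_le_eq)
    then show ?thesis using Shock by (simp add: \<sigma>_def algebra_simps)
  next
    case (Raref a b)
    have "fS a C * (u - a) \<le> f u C - f a C" "f b C - f u C \<le> fS b C * (b - u)"
      using Raref assms by (auto intro!: f_increment_ge f_increment_le)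
    then show ?thesis using Raref by (simp add: algebra_simps)
  qed
  then show "f (p_start p) C + p_vi f fS C p * (u - p_start p) \<le> f u C"
    and "f (p_end p) C + p_vf f fS C p * (u - p_end p) \<le> f u C" by auto
qed

lemma falling_piece_below_lines:
  assumes "p_valid f fS C p" "p_end p < p_start p" "p_end p < u" "u < p_start p"
  shows "f u C \<le> f (p_start p) C + p_vi f fS C p * (u - p_start p)"
    and "f u C \<le> f (p_end p) C + p_vf f fS C p * (u - p_end p)"
proof -
  have "f u C \<le> f (p_start p) C + p_vi f fS C p * (u - p_start p) \<and>
        f u C \<le> f (p_end p) C + p_vf f fS C p * (u - p_end p)"
  proof (cases p)
    case (Shock a b)
    define \<sigma> where "\<sigma> = (f b C - f a C) / (b - a)"
    have "min a b < u" "u < max a b" using Shock assms by auto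
    with assms(1) have "\<sigma> \<le> (f u C - f a C) / (u - a)" "(f u C - f b C) / (u - b) \<le> \<sigma>"
      unfolding Shock \<sigma>_def p_valid.simps by blast+
    then have "f u C - f a C \<le> \<sigma> * (u - a)" "f u C - f b C \<le> \<sigma> * (u - b)"
      using Shock assms by (simp_all add: neg_le_divide_eq pos_divide_le_eq)
    then show ?thesis using Shock by (simp add: \<sigma>_def algebra_simps)
  next
    case (Raref a b)
    have "fS a C * (a - u) \<le> f a C - f u C" "f u C - f b C \<le> fS b C * (u - b)"
      using Raref assms by (auto intro!: f_increment_ge f_increment_le)
    then show ?thesis using Raref by (simp add: algebra_simps)
  qed
  then show "f u C \<le> f (p_start p) C + p_vi f fS C p * (u - p_start p)"
    and "f u C \<le> f (p_end p) C + p_vf f fS C p * (u - p_end p)" by auto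
qed

text \<open>A fan cannot reverse direction at a junction: f would be squeezed between two lines through
  the junction point and hence be affine near it.\<close>
lemma no_rise_then_fall:
  assumes p: "p_valid f fS C p" and q: "p_valid f fS C q"
    and "p_start p < p_end p" "p_end p = p_start q" "p_end q < p_start q"
    and speeds: "p_vf f fS C p \<le> p_vi f fS C q"
  shows False
proof -
  define b where "b = p_end p"
  define v where "v = p_vf f fS C p"
  have "0 \<le> max (p_start p) (p_end q)" "max (p_start p) (p_end q) < b" "b \<le> 1"
    using piece_range[OF p] piece_range[OF q] assms by (auto simp: b_def)
  then show False
  proof (rule f_not_affine[of _ _ "f b C - v * b" v])
    fix u assume u: "max (p_start p) (p_end q) < u" "u < b"
    have "f b C + v * (u - b) \<le> f u C"
      using rising_piece_above_lines(2)[OF p] assms u by (simp add: b_def v_def)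
    moreover have "f u C \<le> f b C + p_vi f fS C q * (u - b)"
      using falling_piece_below_lines(1)[OF q] assms u by (simp add: b_def)
    moreover have "p_vi f fS C q * (u - b) \<le> v * (u - b)"
      using speeds u by (simp add: v_def mult_right_mono_neg)
    ultimately show "f u C = f b C - v * b + v * u" by (simp add: algebra_simps)
  qed
qed

lemma no_fall_then_rise:
  assumes p: "p_valid f fS C p" and q: "p_valid f fS C q"
    and "p_end p < p_start p" "p_end p = p_start q" "p_start q < p_end q"
    and speeds: "p_vf f fS C p \<le> p_vi f fS C q"
  shows False
proof -
  define b where "b = p_end p"
  define v where "v = p_vf f fS C p"
  have "0 \<le> b" "b < min (p_start p) (p_end q)" "min (p_start p) (p_end q) \<le> 1"
    using piece_range[OF p] piece_range[OF q] assms by (auto simp: b_def)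
  then show False
  proof (rule f_not_affine[of _ _ "f b C - v * b" v])
    fix u assume u: "b < u" "u < min (p_start p) (p_end q)"
    have "f u C \<le> f b C + v * (u - b)"
      using falling_piece_below_lines(2)[OF p] assms u by (simp add: b_def v_def)
    moreover have "f b C + p_vi f fS C q * (u - b) \<le> f u C"
      using rising_piece_above_lines(1)[OF q] assms u by (simp add: b_def)
    moreover have "v * (u - b) \<le> p_vi f fS C q * (u - b)"
      using speeds u by (simp add: v_def mult_right_mono)
    ultimately show "f u C = f b C - v * b + v * u" by (simp add: algebra_simps)
  qed
qed

definition fan :: "piece list \<Rightarrow> bool" where
  "fan ps \<longleftrightarrow> ps \<noteq> [] \<and> (\<forall>p\<in>set ps. p_valid f fS C p) \<and>
     (\<forall>i. Suc i < length ps \<longrightarrow>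
        p_end (ps ! i) = p_start (ps ! Suc i) \<and> p_vf f fS C (ps ! i) \<le> p_vi f fS C (ps ! Suc i))"

lemma fan_valid: "fan ps \<Longrightarrow> k < length ps \<Longrightarrow> p_valid f fS C (ps ! k)"
  by (simp add: fan_def)

lemma fan_step: "fan ps \<Longrightarrow> Suc i < length ps \<Longrightarrow>
    p_end (ps ! i) = p_start (ps ! Suc i) \<and> p_vf f fS C (ps ! i) \<le> p_vi f fS C (ps ! Suc i)"
  by (simp add: fan_def)

text \<open>Pieces with equal endpoints are trivial rarefactions (a trivial shock is not valid), whose
  two speeds coincide, so they do not break the ordering of speeds across them.\<close>
lemma fan_junction:
  assumes F: "fan ps" and "i < j" "j < length ps"
    and trivial: "\<And>k. i < k \<Longrightarrow> k < j \<Longrightarrow> p_start (ps ! k) = p_end (ps ! k)"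
  shows "p_end (ps ! i) = p_start (ps ! j) \<and> p_vf f fS C (ps ! i) \<le> p_vi f fS C (ps ! j)"
  using assms(2-4)
proof (induction j)
  case (Suc j)
  show ?case
  proof (cases "i = j")
    case False
    then have "i < j" using Suc by simp
    then have "p_end (ps ! i) = p_start (ps ! j) \<and> p_vf f fS C (ps ! i) \<le> p_vi f fS C (ps ! j)"
      using Suc by auto
    moreover have "p_start (ps ! j) = p_end (ps ! j)" using Suc \<open>i < j\<close> by auto
    moreover from this have "p_vi f fS C (ps ! j) = p_vf f fS C (ps ! j)"
      using trivial_piece_speeds fan_valid[OF F] Suc by simp
    ultimately show ?thesis using fan_step[OF F, of j] Suc by auto
  qed (use fan_step[OF F, of j] Suc in simp)
qed simp

definition opposite_pieces :: "piece \<Rightarrow> piece \<Rightarrow> bool" where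
  "opposite_pieces p q \<longleftrightarrow>
     p_start p < p_end p \<and> p_end q < p_start q \<or> p_end p < p_start p \<and> p_start q < p_end q"

lemma fan_no_opposite_pieces:
  assumes F: "fan ps"
  shows "i < j \<Longrightarrow> j < length ps \<Longrightarrow> \<not> opposite_pieces (ps ! i) (ps ! j)"
proof (induction "j - i" arbitrary: i j rule: less_induct)
  case less
  show ?case
  proof (cases "\<exists>k. i < k \<and> k < j \<and> p_start (ps ! k) \<noteq> p_end (ps ! k)")
    case True
    then obtain k where k: "i < k" "k < j" "p_start (ps ! k) \<noteq> p_end (ps ! k)" by auto
    have "\<not> opposite_pieces (ps ! i) (ps ! k)" "\<not> opposite_pieces (ps ! k) (ps ! j)"
      using less k by auto
    then show ?thesis using k(3) unfolding opposite_pieces_def by linarith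
  next
    case False
    then have "p_end (ps ! i) = p_start (ps ! j) \<and> p_vf f fS C (ps ! i) \<le> p_vi f fS C (ps ! j)"
      using fan_junction[OF F less.prems] by auto
    moreover have "p_valid f fS C (ps ! i)" "p_valid f fS C (ps ! j)"
      using fan_valid[OF F] less.prems by auto
    ultimately show ?thesis
      using no_rise_then_fall no_fall_then_rise unfolding opposite_pieces_def by blast
  qed
qed

lemma fan_direction:
  assumes "fan ps"
  shows "(\<forall>k < length ps. p_start (ps ! k) \<le> p_end (ps ! k)) \<or>
         (\<forall>k < length ps. p_end (ps ! k) \<le> p_start (ps ! k))"
proof (rule ccontr)
  assume "\<not> ?thesis"
  then obtain i j where "i < length ps" "j < length ps"
    and "p_end (ps ! i) < p_start (ps ! i)" "p_start (ps ! j) < p_end (ps ! j)"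
    by (auto simp: not_le)
  then show False
    using fan_no_opposite_pieces[OF assms, of i j] fan_no_opposite_pieces[OF assms, of j i]
    unfolding opposite_pieces_def by (cases i j rule: linorder_cases) auto
qed

lemma fan_vi_mono: "fan ps \<Longrightarrow> k < length ps \<Longrightarrow> p_vi f fS C (ps ! 0) \<le> p_vi f fS C (ps ! k)"
proof (induction k)
  case (Suc k)
  then show ?case using fan_step[of ps k] piece_vi_le_vf[OF fan_valid, of ps k] by force
qed simp

lemma rising_fan_end_mono:
  assumes "fan ps" "\<forall>k < length ps. p_start (ps ! k) \<le> p_end (ps ! k)"
  shows "k < length ps \<Longrightarrow> p_end (ps ! 0) \<le> p_end (ps ! k)"
proof (induction k)
  case (Suc k)
  then show ?case using fan_step[OF assms(1), of k] assms(2) by force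
qed simp

lemma falling_fan_end_le_start:
  assumes "fan ps" "\<forall>k < length ps. p_end (ps ! k) \<le> p_start (ps ! k)"
  shows "k < length ps \<Longrightarrow> p_end (ps ! k) \<le> p_start (ps ! 0)"
proof (induction k)
  case (Suc k)
  then show ?case using fan_step[OF assms(1), of k] assms(2) by force
qed (use assms(2) in simp)

lemma rising_piece_increment_ge:
  assumes "p_valid f fS C p" "p_start p \<le> p_end p" "l \<le> p_vi f fS C p"
  shows "l * (p_end p - p_start p) \<le> f (p_end p) C - f (p_start p) C"
proof (cases p)
  case (Shock a b)
  then have "a < b" using assms by auto
  then have "l * (b - a) \<le> (f b C - f a C) / (b - a) * (b - a)"
    using assms Shock by (intro mult_right_mono) auto
  then show ?thesis using Shock \<open>a < b\<close> by simp
next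
  case (Raref a b)
  then show ?thesis using assms by simp (rule f_increment_ge, auto intro: order_trans)
qed

lemma rising_fan_increment_ge:
  assumes F: "fan ps" and rising: "\<forall>k < length ps. p_start (ps ! k) \<le> p_end (ps ! k)"
    and l: "l \<le> p_vi f fS C (ps ! 0)"
  shows "k < length ps \<Longrightarrow> l * (p_end (ps ! k) - p_start (ps ! 0)) \<le> f (p_end (ps ! k)) C - f (p_start (ps ! 0)) C"
proof (induction k)
  case 0
  then show ?case using rising_piece_increment_ge[OF fan_valid[OF F] rising[rule_format] l] by simp
next
  case (Suc k)
  have "l \<le> p_vi f fS C (ps ! Suc k)" using fan_vi_mono[OF F Suc.prems] l by simp
  then have "l * (p_end (ps ! Suc k) - p_start (ps ! Suc k)) \<le> f (p_end (ps ! Suc k)) C - f (p_start (ps ! Suc k)) C"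
    using rising_piece_increment_ge fan_valid[OF F Suc.prems] rising Suc.prems by blast
  moreover have "p_start (ps ! Suc k) = p_end (ps ! k)" using fan_step[OF F Suc.prems] by simp
  ultimately show ?case using Suc by (simp add: algebra_simps)
qed

lemma vi_less_lam_of_gt_s_star:
  assumes p: "p_valid f fS C p" and a: "p_start p = a" "s_star < a"
  shows "p_vi f fS C p < lam a"
proof (cases p)
  case (Raref x y)
  then show ?thesis using lam_le_fS_iff[of a] piece_range[OF p] a by auto
next
  case (Shock x b)
  have ab: "x = a" "a \<noteq> b" "a \<in> {0..1}" "b \<in> {0..1}" using Shock p a by auto
  show ?thesis
  proof (cases "a < b")
    case True
    then have "lam b < lam a" using lam_less_iff_right[of b a] ab a by auto
    then have "f b C - f a C < lam a * (b - a)" using lam_le_iff_chord[of a b] ab by auto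
    then show ?thesis using Shock ab True by (simp add: pos_divide_less_eq)
  next
    case False
    define u where "u = (max b s_star + a) / 2"
    have u: "max b s_star < u" "u < a" using a False ab by (auto simp: u_def)
    then have "lam a < lam u" using lam_less_iff_right[of a u] ab a by auto
    then have "lam a * (u - a) < f u C - f a C" using lam_less_iff_chord[of a u] ab u s_star by auto
    then have "(f u C - f a C) / (u - a) < lam a" using u by (simp add: neg_divide_less_eq)
    moreover have "(f b C - f a C) / (b - a) \<le> (f u C - f a C) / (u - a)"
      using p Shock ab u False by auto
    ultimately show ?thesis using Shock ab by simp
  qed
qed

lemma lam_le_vi_of_end_le_Sk:
  assumes p: "p_valid f fS C p" and a: "p_start p = a" "a \<le> s_star"
    and end_le: "ereal (p_end p) \<le> Sk f fS A (a, C)"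
  shows "lam a \<le> p_vi f fS C p"
proof (cases p)
  case (Raref x y)
  then show ?thesis using lam_le_fS_iff[of a] piece_range[OF p] a by auto
next
  case (Shock x b)
  have ab: "x = a" "a \<noteq> b" "a \<in> {0..1}" "b \<in> {0..1}" using Shock p a by auto
  show ?thesis
  proof (cases "a < b")
    case True
    then have "lam a \<le> lam b" using le_Sk_iff[of a b] end_le Shock ab a by auto
    then have "lam a * (b - a) \<le> f b C - f a C" using lam_le_iff_chord[of a b] ab by auto
    then show ?thesis using Shock ab True by (simp add: pos_le_divide_eq)
  next
    case False
    then have "lam b < lam a" using lam_less_iff_left[of b a] ab a by auto
    then have "f b C - f a C < lam a * (b - a)" using lam_le_iff_chord[of a b] ab by auto
    then show ?thesis using Shock ab False by (simp add: neg_le_divide_eq)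
  qed
qed

lemma fan_hd_last:
  assumes "fan ps"
  shows "hd ps = ps ! 0" "last ps = ps ! (length ps - 1)" "0 < length ps" "length ps - 1 < length ps"
  using assms by (auto simp: fan_def hd_conv_nth last_conv_nth)

lemma rising_fan_lam_le_vi_iff:
  assumes F: "fan ps" and rising: "\<forall>k < length ps. p_start (ps ! k) \<le> p_end (ps ! k)"
    and a: "a = p_start (hd ps)" "a \<le> s_star" and c: "c = p_end (last ps)"
  shows "lam a \<le> p_vi f fS C (hd ps) \<longleftrightarrow> ereal c \<le> Sk f fS A (a, C)"
proof -
  have first: "p_valid f fS C (hd ps)" using fan_valid[OF F] fan_hd_last[OF F] by simp
  have a01: "a \<in> {0..1}" and c01: "c \<in> {0..1}"
    using piece_range[OF first] piece_range[OF fan_valid[OF F]] fan_hd_last[OF F] a c by auto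
  have first_end: "a \<le> p_end (hd ps)" "p_end (hd ps) \<le> c"
    using rising rising_fan_end_mono[OF F rising] fan_hd_last[OF F] a c by auto
  show ?thesis
  proof
    assume "lam a \<le> p_vi f fS C (hd ps)"
    then have "lam a * (c - a) \<le> f c C - f a C"
      using rising_fan_increment_ge[OF F rising] fan_hd_last[OF F] a c by simp
    then have "lam a \<le> lam c" using lam_le_iff_chord a01 c01 by auto
    then show "ereal c \<le> Sk f fS A (a, C)" using le_Sk_iff[of a c] first_end a01 c01 a(2) by auto
  next
    assume "ereal c \<le> Sk f fS A (a, C)"
    then have "ereal (p_end (hd ps)) \<le> Sk f fS A (a, C)"
      using first_end(2) order_trans[of "ereal (p_end (hd ps))" "ereal c"] by auto
    then show "lam a \<le> p_vi f fS C (hd ps)" using lam_le_vi_of_end_le_Sk first a by blast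
  qed
qed

lemma fan_lam_le_vi_iff:
  assumes F: "fan ps" and a: "a = p_start (hd ps)" and c: "c = p_end (last ps)"
  shows "lam a \<le> p_vi f fS C (hd ps) \<longleftrightarrow> a \<le> s_star \<and> ereal c \<le> Sk f fS A (a, C)"
proof (cases "a \<le> s_star")
  case False
  have "p_valid f fS C (hd ps)" using fan_valid[OF F] fan_hd_last[OF F] by simp
  then show ?thesis using vi_less_lam_of_gt_s_star a False by fastforce
next
  case True
  consider (rising) "\<forall>k < length ps. p_start (ps ! k) \<le> p_end (ps ! k)"
    | (falling) "\<forall>k < length ps. p_end (ps ! k) \<le> p_start (ps ! k)"
    using fan_direction[OF F] by blast
  then show ?thesis
  proof cases
    case rising
    then show ?thesis using rising_fan_lam_le_vi_iff[OF F rising a True c] True by blast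
  next
    case falling
    have first: "p_valid f fS C (hd ps)" and a01: "a \<in> {0..1}"
      using fan_valid[OF F] fan_hd_last[OF F] piece_range a by auto
    have "ereal a \<le> Sk f fS A (a, C)" using le_Sk_iff[of a a] a01 True by simp
    moreover have "c \<le> a" "p_end (hd ps) \<le> a"
      using falling_fan_end_le_start[OF F falling] fan_hd_last[OF F] a c by auto
    ultimately have "ereal c \<le> Sk f fS A (a, C)" "ereal (p_end (hd ps)) \<le> Sk f fS A (a, C)"
      using order_trans by (metis ereal_less_eq(3))+
    then show ?thesis using lam_le_vi_of_end_le_Sk[OF first a[symmetric] True] True by blast
  qed
qed

end

theorem lemma3p1:
  fixes f fS fC :: "real \<Rightarrow> real \<Rightarrow> real" and A :: real
    and UL UM UR :: "real \<times> real" and ps :: "piece list"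
  assumes "flux_hyps f fS fC A"
    and "UL \<in> Dom" and "UM \<in> Dom" and "UR \<in> Dom"
    and "UL \<noteq> UR"
    and "C_wave_admissible f fS A UL UM"
    and "S_wave f fS UM UR ps"
  shows "compatible_CS f fS A UL UM ps \<longleftrightarrow>
         (UM \<in> LL f fS A \<union> TT f fS A \<and> 0 \<le> fst UR \<and> ereal (fst UR) \<le> Sk f fS A UM)"
proof -
  obtain a C where UM: "UM = (a, C)" by (cases UM)
  have a: "a \<in> {0..1}" and C: "C \<in> {0..1}" using assms(3) UM by (auto simp: Dom_def)
  interpret flux_slice f fS fC A C using assms(1) C by unfold_locales
  have "fan ps" using assms(7) unfolding S_wave_def fan_def UM snd_conv by blast
  moreover have "a = p_start (hd ps)" "fst UR = p_end (last ps)"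
    using assms(7) UM by (auto simp: S_wave_def)
  moreover have "compatible_CS f fS A UL UM ps \<longleftrightarrow> lam a \<le> p_vi f fS C (hd ps)"
    using assms(6) UM by (simp add: compatible_CS_def C_wave_admissible_def C_v_def S_vi_def lamC_slice)
  moreover have "0 \<le> fst UR" using assms(4) by (auto simp: Dom_def)
  ultimately show ?thesis using fan_lam_le_vi_iff LT_iff_le_s_star[OF a] UM by auto
qed

end
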